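(* Let $\alpha_a$ be a labeled dGL hybrid game. If $S$ is an inductive Angelic subvalue map for $\alpha_a$, then $S$ is an Angelic subvalue map for $\alpha_a$, i.e. $\models S(b)\rightarrow\langle\mathrm{suffix}_b(\alpha_a)\rangle S(\mathsf{end})$ for every $b\in\mathrm{nodes}(\alpha_a)$. Dually, if $S$ is an inductive Demonic subvalue map for $\alpha_a$, then $S$ is a Demonic subvalue map for $\alpha_a$, i.e. $\models S(b)\rightarrow[\mathrm{suffix}_b(\alpha_a)] S(\mathsf{end})$ for every $b\in\mathrm{nodes}(\alpha_a)$.
   Context: Differential game logic (dGL). Hybrid games are generated by $\alpha,\beta ::= x:=e \mid \alpha;\beta \mid ?Q \mid \{x'=f(x)\,\&\,Q\} \mid \alpha^{*} \mid \alpha\cup\beta \mid x:=* \mid\ !Q \mid \{x'=f(x)\,\&\,Q\}^{d} \mid \alpha^{\times} \mid \alpha\cap\beta \mid x:=\otimes$, with $x$ a real variable (vector for ODEs), $e,f(x)$ polynomial terms, $Q$ a formula. Players Angel and Demon: $x:=e$ deterministic assignment; in $x:=*$ Angel (in $x:=\otimes$ Demon) assigns any real to $x$; in $\{x'=f(x)\&Q\}$ Angel (in $\{x'=f(x)\&Q\}^d$ Demon) chooses a duration $r\ge 0$ of following the ODE with $Q$ true throughout; $?Q$ makes Angel lose and $!Q$ makes Demon lose if $Q$ is false; in $\alpha\cup\beta$ Angel (in $\alpha\cap\beta$ Demon) chooses the branch; in $\alpha^*$ Angel (in $\alpha^\times$ Demon) decides before each iteration whether to repeat or stop; $\alpha;\beta$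 is sequential composition. Formulas: polynomial (in)equalities closed under connectives, real quantifiers, and modalities $\langle\alpha\rangle\varphi$ (Angel has a winning strategy in $\alpha$ to reach $\varphi$ whatever Demon does) and $[\alpha]\varphi\equiv\neg\langle\alpha\rangle\neg\varphi$ (Demon has one), with the standard dGL winning-region semantics ($\langle x:=*\rangle\varphi\leftrightarrow\exists x\varphi$, $\langle x:=\otimes\rangle\varphi\leftrightarrow\forall x\varphi$, $\langle ?Q\rangle\varphi\leftrightarrow Q\wedge\varphi$, $\langle !Q\rangle\varphi\leftrightarrow(Q\rightarrow\varphi)$, $\langle\alpha\cup\beta\rangle\varphi\leftrightarrow\langle\alpha\rangle\varphi\vee\langle\beta\rangle\varphi$, $\langle\alpha\cap\beta\rangle\varphi\leftrightarrow\langle\alpha\rangle\varphi\wedge\langle\beta\rangle\varphi$, $\langle\alpha;\beta\rangle\varphi\leftrightarrow\langle\alpha\rangle\langle\beta\rangle\varphi$, Angel ODE: some duration/solution staying in $Q$ reaches $\varphi$, Demon ODE: all do; $\langle\alpha^*\rangle$ least fixed point, $\langle\alpha^\times\rangle$ greatest fixed point of the respective winning-region equations). $\models\psi$ means $\psi$ is valid. Labels. Every node of the syntax tree carries a unique label; $\alpha_a$ has root label $a$; $\mathrm{nodes}(\alpha_a)$ is the set of labels of its subgames (including $a$); a special label $\mathsf{end}\notin\mathrm{nodes}(\alpha_a)$. A map $S$ assigns formulas to a label set containing $\mathrm{nodes}(\alpha_a)\cup\{\mathsf{end}\}$; $S\{\mathsf{end}\mapsto Q\}$ replaces the value at $\mathsf{end}$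 by $Q$. $\gamma_g,\delta_d$ denote immediate subgames with root labels $g,d$. Game suffix: $\mathrm{suffix}_a(\alpha_a)=\alpha_a$; for $b\ne a$: for loops $((\gamma_g)^* )_a,((\gamma_g)^\times)_a$ it is $\mathrm{suffix}_b(\gamma_g);\alpha_a$; for $\cup,\cap$ the suffix in the branch containing $b$; for $(\gamma_g;\delta_d)_a$ it is $\mathrm{suffix}_b(\gamma_g);\delta_d$ if $b\in\mathrm{nodes}(\gamma_g)$, else $\mathrm{suffix}_b(\delta_d)$. Angelic (resp. Demonic) subvalue map: $\models S(b)\rightarrow\langle\mathrm{suffix}_b(\alpha_a)\rangle S(\mathsf{end})$ (resp. $\models S(b)\rightarrow[\mathrm{suffix}_b(\alpha_a)]S(\mathsf{end})$) for all $b\in\mathrm{nodes}(\alpha_a)$. Angelic existential projection $\mathcal{P}(\alpha_a,S)$: $(x:=* )_a\mapsto(x:=* )_a;?S(\mathsf{end})$; $\{x'=f(x)\&Q\}_a\mapsto\{x'=f(x)\&Q\}_a;?S(\mathsf{end})$; $(\gamma_g\cup\delta_d)_a\mapsto(?S(g);\mathcal{P}(\gamma_g,S))\cup(?S(d);\mathcal{P}(\delta_d,S))$; $((\gamma_g)^* )_a\mapsto(?S(g);\mathcal{P}(\gamma_g,S\{\mathsf{end}\mapsto S(a)\}))^*;?S(\mathsf{end})$; $(\gamma_g;\delta_d)_a\mapsto\mathcal{P}(\gamma_g,S\{\mathsf{end}\mapsto S(d)\});\mathcal{P}(\delta_d,S)$; $\cap\mapsto\mathcal{P}(\gamma_g,S)\cap\mathcal{P}(\delta_d,S)$;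 $((\gamma_g)^\times)_a\mapsto\mathcal{P}(\gamma_g,S\{\mathsf{end}\mapsto S(a)\})^\times$; $x:=e,x:=\otimes,?Q,!Q$, Demon ODE unchanged (labels preserved, new nodes fresh labels). Demonic existential projection $\mathcal{D}(\alpha_a,S)$: $(x:=\otimes)_a\mapsto(x:=\otimes)_a;!S(\mathsf{end})$; $(\{x'=f(x)\&Q\}^d)_a\mapsto(\{x'=f(x)\&Q\}^d)_a;!S(\mathsf{end})$; $(\gamma_g\cap\delta_d)_a\mapsto(!S(g);\mathcal{D}(\gamma_g,S))\cap(!S(d);\mathcal{D}(\delta_d,S))$; $((\gamma_g)^\times)_a\mapsto(!S(g);\mathcal{D}(\gamma_g,S\{\mathsf{end}\mapsto S(g)\vee S(\mathsf{end})\}))^\times;!S(\mathsf{end})$; $(\gamma_g;\delta_d)_a\mapsto\mathcal{D}(\gamma_g,S\{\mathsf{end}\mapsto S(d)\});\mathcal{D}(\delta_d,S)$; $(\gamma_g\cup\delta_d)_a\mapsto\mathcal{D}(\gamma_g,S)\cup\mathcal{D}(\delta_d,S)$; $((\gamma_g)^* )_a\mapsto\mathcal{D}(\gamma_g,S\{\mathsf{end}\mapsto S(a)\})^*$; $x:=e,x:=*,?Q,!Q$, Angel ODE unchanged (labels preserved, new nodes fresh labels). Inductive Angelic subvalue map ($S\Vdash\alpha_a$), recursively: atomic $\alpha$ (assignments of all three kinds, tests, both ODE kinds): $\models S(a)\rightarrow\langle\alpha\rangle S(\mathsf{end})$; $(\gamma_g\cup\delta_d)_a$: $\models S(a)\rightarrow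 S(g)\vee S(d)$, $S\Vdash\gamma_g$, $S\Vdash\delta_d$; $(\gamma_g\cap\delta_d)_a$: $\models S(a)\rightarrow S(g)\wedge S(d)$ and both; $(\gamma_g;\delta_d)_a$: $\models S(a)\rightarrow S(g)$, $S\{\mathsf{end}\mapsto S(d)\}\Vdash\gamma_g$, $S\Vdash\delta_d$; $((\gamma_g)^* )_a$: $\models S(a)\rightarrow\langle\mathcal{P}(\alpha_a,S)\rangle S(\mathsf{end})$ and $S\{\mathsf{end}\mapsto S(a)\}\Vdash\gamma_g$; $((\gamma_g)^\times)_a$: $\models S(a)\rightarrow S(g)\wedge S(\mathsf{end})$ and $S\{\mathsf{end}\mapsto S(a)\}\Vdash\gamma_g$. Inductive Demonic subvalue map, recursively: atomic: $\models S(a)\rightarrow[\alpha]S(\mathsf{end})$; $\cup$: $\models S(a)\rightarrow S(g)\wedge S(d)$ and recursively for both; $\cap$: $\models S(a)\rightarrow S(g)\vee S(d)$ and both; $;$: $\models S(a)\rightarrow S(g)$, $S\{\mathsf{end}\mapsto S(d)\}$ for $\gamma_g$, $S$ for $\delta_d$; $((\gamma_g)^* )_a$: $\models S(a)\rightarrow S(\mathsf{end})\wedge S(g)$ and $S\{\mathsf{end}\mapsto S(a)\}$ for $\gamma_g$; $((\gamma_g)^\times)_a$: $\models S(a)\rightarrow[\mathcal{D}(\alpha_a,S)]S(\mathsf{end})$ and $S\{\mathsf{end}\mapsto S(a)\}$ for $\gamma_g$. *)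

theory Defs
  imports "HOL-Analysis.Analysis"
begin

type_synonym var = nat
type_synonym state = "var \<Rightarrow> real"

datatype trm = TVar var | TConst real | TNeg trm | TPlus trm trm | TTimes trm trm

text \<open>Unlabelled hybrid games and formulas (mutually recursive).
  An ODE system is a list of pairs (x_i, f_i(x)) meaning x_i' = f_i(x).\<close>
datatype game =
    Assign var trm
  | AssignAny var
  | AssignDemon var
  | Test fml
  | DTest fml
  | ODE "(var \<times> trm) list" fml
  | DODE "(var \<times> trm) list" fml
  | Choice game game
  | DChoice game game
  | Seq game game
  | Loop game
  | DLoop game
and fml =
    FGeq trm trm | FGt trm trm | FEq trm trm
  | FNot fml | FAnd fml fml | FOr fml fml
  | FExists var fml | FForall var fml
  | FDia game fml

definition Imp :: "fml \<Rightarrow> fml \<Rightarrow> fml" where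
  "Imp p q = FOr (FNot p) q"

definition Box :: "game \<Rightarrow> fml \<Rightarrow> fml" where
  "Box \<alpha> p = FNot (FDia \<alpha> (FNot p))"

primrec tsem :: "trm \<Rightarrow> state \<Rightarrow> real" where
  "tsem (TVar x) \<nu> = \<nu> x"
| "tsem (TConst c) \<nu> = c"
| "tsem (TNeg e) \<nu> = - tsem e \<nu>"
| "tsem (TPlus e1 e2) \<nu> = tsem e1 \<nu> + tsem e2 \<nu>"
| "tsem (TTimes e1 e2) \<nu> = tsem e1 \<nu> * tsem e2 \<nu>"

definition ode_sol :: "(var \<times> trm) list \<Rightarrow> state set \<Rightarrow> state \<Rightarrow> real \<Rightarrow> (real \<Rightarrow> state) \<Rightarrow> bool" where
  "ode_sol ode Q \<nu> r \<phi> \<longleftrightarrow>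
     r \<ge> 0 \<and> \<phi> 0 = \<nu> \<and>
     (\<forall>t\<in>{0..r}. \<phi> t \<in> Q \<and>
        (\<forall>y. y \<notin> fst ` set ode \<longrightarrow> \<phi> t y = \<nu> y) \<and>
        (\<forall>(x, f)\<in>set ode. ((\<lambda>s. \<phi> s x) has_real_derivative tsem f (\<phi> t)) (at t within {0..r})))"

primrec win :: "game \<Rightarrow> state set \<Rightarrow> state set" and fsem :: "fml \<Rightarrow> state set" where
  "win (Assign x e) X = {\<nu>. \<nu>(x := tsem e \<nu>) \<in> X}"
| "win (AssignAny x) X = {\<nu>. \<exists>v. \<nu>(x := v) \<in> X}"
| "win (AssignDemon x) X = {\<nu>. \<forall>v. \<nu>(x := v) \<in> X}"
| "win (Test Q) X = fsem Q \<inter> X"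
| "win (DTest Q) X = {\<nu>. \<nu> \<in> fsem Q \<longrightarrow> \<nu> \<in> X}"
| "win (ODE ode Q) X = {\<nu>. \<exists>r \<phi>. ode_sol ode (fsem Q) \<nu> r \<phi> \<and> \<phi> r \<in> X}"
| "win (DODE ode Q) X = {\<nu>. \<forall>r \<phi>. ode_sol ode (fsem Q) \<nu> r \<phi> \<longrightarrow> \<phi> r \<in> X}"
| "win (Choice \<alpha> \<beta>) X = win \<alpha> X \<union> win \<beta> X"
| "win (DChoice \<alpha> \<beta>) X = win \<alpha> X \<inter> win \<beta> X"
| "win (Seq \<alpha> \<beta>) X = win \<alpha> (win \<beta> X)"
| "win (Loop \<alpha>) X = lfp (\<lambda>Z. X \<union> win \<alpha> Z)"
| "win (DLoop \<alpha>) X = gfp (\<lambda>Z. X \<inter> win \<alpha> Z)"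
| "fsem (FGeq a b) = {\<nu>. tsem a \<nu> \<ge> tsem b \<nu>}"
| "fsem (FGt a b) = {\<nu>. tsem a \<nu> > tsem b \<nu>}"
| "fsem (FEq a b) = {\<nu>. tsem a \<nu> = tsem b \<nu>}"
| "fsem (FNot p) = - fsem p"
| "fsem (FAnd p q) = fsem p \<inter> fsem q"
| "fsem (FOr p q) = fsem p \<union> fsem q"
| "fsem (FExists x p) = {\<nu>. \<exists>v. \<nu>(x := v) \<in> fsem p}"
| "fsem (FForall x p) = {\<nu>. \<forall>v. \<nu>(x := v) \<in> fsem p}"
| "fsem (FDia \<alpha> p) = win \<alpha> (fsem p)"

definition valid :: "fml \<Rightarrow> bool" where
  "valid p \<longleftrightarrow> (\<forall>\<nu>. \<nu> \<in> fsem p)"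

datatype lgame =
    LAssign nat var trm
  | LAssignAny nat var
  | LAssignDemon nat var
  | LTest nat fml
  | LDTest nat fml
  | LODE nat "(var \<times> trm) list" fml
  | LDODE nat "(var \<times> trm) list" fml
  | LChoice nat lgame lgame
  | LDChoice nat lgame lgame
  | LSeq nat lgame lgame
  | LLoop nat lgame
  | LDLoop nat lgame

datatype lbl = N nat | End

primrec lab :: "lgame \<Rightarrow> nat" where
  "lab (LAssign a x e) = a"
| "lab (LAssignAny a x) = a"
| "lab (LAssignDemon a x) = a"
| "lab (LTest a Q) = a"
| "lab (LDTest a Q) = a"
| "lab (LODE a ode Q) = a"
| "lab (LDODE a ode Q) = a"
| "lab (LChoice a g d) = a"
| "lab (LDChoice a g d) = a"
| "lab (LSeq a g d) = a"
| "lab (LLoop a g) = a"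
| "lab (LDLoop a g) = a"

primrec node_list :: "lgame \<Rightarrow> nat list" where
  "node_list (LAssign a x e) = [a]"
| "node_list (LAssignAny a x) = [a]"
| "node_list (LAssignDemon a x) = [a]"
| "node_list (LTest a Q) = [a]"
| "node_list (LDTest a Q) = [a]"
| "node_list (LODE a ode Q) = [a]"
| "node_list (LDODE a ode Q) = [a]"
| "node_list (LChoice a g d) = a # node_list g @ node_list d"
| "node_list (LDChoice a g d) = a # node_list g @ node_list d"
| "node_list (LSeq a g d) = a # node_list g @ node_list d"
| "node_list (LLoop a g) = a # node_list g"
| "node_list (LDLoop a g) = a # node_list g"

definition nodes :: "lgame \<Rightarrow> nat set" where
  "nodes \<alpha> = set (node_list \<alpha>)"

definition well_labelled :: "lgame \<Rightarrow> bool" where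
  "well_labelled \<alpha> \<longleftrightarrow> distinct (node_list \<alpha>)"

primrec erase :: "lgame \<Rightarrow> game" where
  "erase (LAssign a x e) = Assign x e"
| "erase (LAssignAny a x) = AssignAny x"
| "erase (LAssignDemon a x) = AssignDemon x"
| "erase (LTest a Q) = Test Q"
| "erase (LDTest a Q) = DTest Q"
| "erase (LODE a ode Q) = ODE ode Q"
| "erase (LDODE a ode Q) = DODE ode Q"
| "erase (LChoice a g d) = Choice (erase g) (erase d)"
| "erase (LDChoice a g d) = DChoice (erase g) (erase d)"
| "erase (LSeq a g d) = Seq (erase g) (erase d)"
| "erase (LLoop a g) = Loop (erase g)"
| "erase (LDLoop a g) = DLoop (erase g)"

text \<open>suffix b alpha (only meaningful for b in nodes alpha).\<close>
fun suffix :: "nat \<Rightarrow> lgame \<Rightarrow> game" where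
  "suffix b (LChoice a g d) =
     (if b = a then erase (LChoice a g d) else if b \<in> nodes g then suffix b g else suffix b d)"
| "suffix b (LDChoice a g d) =
     (if b = a then erase (LDChoice a g d) else if b \<in> nodes g then suffix b g else suffix b d)"
| "suffix b (LSeq a g d) =
     (if b = a then erase (LSeq a g d)
      else if b \<in> nodes g then Seq (suffix b g) (erase d) else suffix b d)"
| "suffix b (LLoop a g) =
     (if b = a then erase (LLoop a g) else Seq (suffix b g) (erase (LLoop a g)))"
| "suffix b (LDLoop a g) =
     (if b = a then erase (LDLoop a g) else Seq (suffix b g) (erase (LDLoop a g)))"
| "suffix b \<alpha> = erase \<alpha>"

type_synonym smap = "lbl \<Rightarrow> fml"

primrec proj_ang :: "lgame \<Rightarrow> smap \<Rightarrow> game" where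
  "proj_ang (LAssign a x e) S = Assign x e"
| "proj_ang (LAssignAny a x) S = Seq (AssignAny x) (Test (S End))"
| "proj_ang (LAssignDemon a x) S = AssignDemon x"
| "proj_ang (LTest a Q) S = Test Q"
| "proj_ang (LDTest a Q) S = DTest Q"
| "proj_ang (LODE a ode Q) S = Seq (ODE ode Q) (Test (S End))"
| "proj_ang (LDODE a ode Q) S = DODE ode Q"
| "proj_ang (LChoice a g d) S =
     Choice (Seq (Test (S (N (lab g)))) (proj_ang g S)) (Seq (Test (S (N (lab d)))) (proj_ang d S))"
| "proj_ang (LDChoice a g d) S = DChoice (proj_ang g S) (proj_ang d S)"
| "proj_ang (LSeq a g d) S = Seq (proj_ang g (S(End := S (N (lab d))))) (proj_ang d S)"
| "proj_ang (LLoop a g) S =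
     Seq (Loop (Seq (Test (S (N (lab g)))) (proj_ang g (S(End := S (N a)))))) (Test (S End))"
| "proj_ang (LDLoop a g) S = DLoop (proj_ang g (S(End := S (N a))))"

primrec proj_dem :: "lgame \<Rightarrow> smap \<Rightarrow> game" where
  "proj_dem (LAssign a x e) S = Assign x e"
| "proj_dem (LAssignAny a x) S = AssignAny x"
| "proj_dem (LAssignDemon a x) S = Seq (AssignDemon x) (DTest (S End))"
| "proj_dem (LTest a Q) S = Test Q"
| "proj_dem (LDTest a Q) S = DTest Q"
| "proj_dem (LODE a ode Q) S = ODE ode Q"
| "proj_dem (LDODE a ode Q) S = Seq (DODE ode Q) (DTest (S End))"
| "proj_dem (LChoice a g d) S = Choice (proj_dem g S) (proj_dem d S)"
| "proj_dem (LDChoice a g d) S =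
     DChoice (Seq (DTest (S (N (lab g)))) (proj_dem g S)) (Seq (DTest (S (N (lab d)))) (proj_dem d S))"
| "proj_dem (LSeq a g d) S = Seq (proj_dem g (S(End := S (N (lab d))))) (proj_dem d S)"
| "proj_dem (LLoop a g) S = Loop (proj_dem g (S(End := S (N a))))"
| "proj_dem (LDLoop a g) S =
     Seq (DLoop (Seq (DTest (S (N (lab g))))
                     (proj_dem g (S(End := FOr (S (N (lab g))) (S End))))))
         (DTest (S End))"

definition ang_subvalue :: "smap \<Rightarrow> lgame \<Rightarrow> bool" where
  "ang_subvalue S \<alpha> \<longleftrightarrow> (\<forall>b\<in>nodes \<alpha>. valid (Imp (S (N b)) (FDia (suffix b \<alpha>) (S End))))"

definition dem_subvalue :: "smap \<Rightarrow> lgame \<Rightarrow> bool" where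
  "dem_subvalue S \<alpha> \<longleftrightarrow> (\<forall>b\<in>nodes \<alpha>. valid (Imp (S (N b)) (Box (suffix b \<alpha>) (S End))))"

primrec ind_ang :: "smap \<Rightarrow> lgame \<Rightarrow> bool" where
  "ind_ang S (LAssign a x e) = valid (Imp (S (N a)) (FDia (Assign x e) (S End)))"
| "ind_ang S (LAssignAny a x) = valid (Imp (S (N a)) (FDia (AssignAny x) (S End)))"
| "ind_ang S (LAssignDemon a x) = valid (Imp (S (N a)) (FDia (AssignDemon x) (S End)))"
| "ind_ang S (LTest a Q) = valid (Imp (S (N a)) (FDia (Test Q) (S End)))"
| "ind_ang S (LDTest a Q) = valid (Imp (S (N a)) (FDia (DTest Q) (S End)))"
| "ind_ang S (LODE a ode Q) = valid (Imp (S (N a)) (FDia (ODE ode Q) (S End)))"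
| "ind_ang S (LDODE a ode Q) = valid (Imp (S (N a)) (FDia (DODE ode Q) (S End)))"
| "ind_ang S (LChoice a g d) =
     (valid (Imp (S (N a)) (FOr (S (N (lab g))) (S (N (lab d))))) \<and> ind_ang S g \<and> ind_ang S d)"
| "ind_ang S (LDChoice a g d) =
     (valid (Imp (S (N a)) (FAnd (S (N (lab g))) (S (N (lab d))))) \<and> ind_ang S g \<and> ind_ang S d)"
| "ind_ang S (LSeq a g d) =
     (valid (Imp (S (N a)) (S (N (lab g)))) \<and> ind_ang (S(End := S (N (lab d)))) g \<and> ind_ang S d)"
| "ind_ang S (LLoop a g) =
     (valid (Imp (S (N a)) (FDia (proj_ang (LLoop a g) S) (S End))) \<and> ind_ang (S(End := S (N a))) g)"
| "ind_ang S (LDLoop a g) =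
     (valid (Imp (S (N a)) (FAnd (S (N (lab g))) (S End))) \<and> ind_ang (S(End := S (N a))) g)"

primrec ind_dem :: "smap \<Rightarrow> lgame \<Rightarrow> bool" where
  "ind_dem S (LAssign a x e) = valid (Imp (S (N a)) (Box (Assign x e) (S End)))"
| "ind_dem S (LAssignAny a x) = valid (Imp (S (N a)) (Box (AssignAny x) (S End)))"
| "ind_dem S (LAssignDemon a x) = valid (Imp (S (N a)) (Box (AssignDemon x) (S End)))"
| "ind_dem S (LTest a Q) = valid (Imp (S (N a)) (Box (Test Q) (S End)))"
| "ind_dem S (LDTest a Q) = valid (Imp (S (N a)) (Box (DTest Q) (S End)))"
| "ind_dem S (LODE a ode Q) = valid (Imp (S (N a)) (Box (ODE ode Q) (S End)))"
| "ind_dem S (LDODE a ode Q) = valid (Imp (S (N a)) (Box (DODE ode Q) (S End)))"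
| "ind_dem S (LChoice a g d) =
     (valid (Imp (S (N a)) (FAnd (S (N (lab g))) (S (N (lab d))))) \<and> ind_dem S g \<and> ind_dem S d)"
| "ind_dem S (LDChoice a g d) =
     (valid (Imp (S (N a)) (FOr (S (N (lab g))) (S (N (lab d))))) \<and> ind_dem S g \<and> ind_dem S d)"
| "ind_dem S (LSeq a g d) =
     (valid (Imp (S (N a)) (S (N (lab g)))) \<and> ind_dem (S(End := S (N (lab d)))) g \<and> ind_dem S d)"
| "ind_dem S (LLoop a g) =
     (valid (Imp (S (N a)) (FAnd (S End) (S (N (lab g))))) \<and> ind_dem (S(End := S (N a))) g)"
| "ind_dem S (LDLoop a g) =
     (valid (Imp (S (N a)) (Box (proj_dem (LDLoop a g) S) (S End))) \<and> ind_dem (S(End := S (N a))) g)"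

end

theory Submission
  imports Defs
begin

text \<open>
  Induction on the game, for all maps S at once. For a node b inside a subgame \<gamma>, the suffix
  of b is its suffix in \<gamma> followed by the continuation of \<gamma> (the second component of a
  sequence, or the loop itself), and the inductive condition for \<gamma> is stated with S(end)
  replaced by the root value of that continuation. Monotonicity of winning regions and their
  compositionality on sequences chain the two; as nothing else is used, this chaining is done once
  for an abstract predicate transformer and then instantiated for Angel and for Demon.
  The players differ only at the roots of loops: for a loop the player controls, the condition is
  stated for the existential projection, whose winning region is included in that of the loop;
  for a loop of the opponent, the root value is an invariant and fixed-point (co)induction applies.
\<close>

lemma valid_Imp: "valid (Imp p q) \<longleftrightarrow> fsem p \<subseteq> fsem q"
  by (auto simp: valid_def Imp_def)

lemma win_mono: "X \<subseteq> Y \<Longrightarrow> win \<alpha> X \<subseteq> win \<alpha> Y"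
proof (induction \<alpha> arbitrary: X Y)
  case (Choice \<alpha> \<beta>)
  then show ?case by (simp add: le_supI1 le_supI2)
next
  case (DChoice \<alpha> \<beta>)
  then show ?case by (simp add: le_infI1 le_infI2)
qed (auto intro!: lfp_mono gfp_mono)

definition dwin :: "game \<Rightarrow> state set \<Rightarrow> state set" where
  "dwin \<alpha> X = - win \<alpha> (- X)"

lemma fsem_Box: "fsem (Box \<alpha> p) = dwin \<alpha> (fsem p)"
  by (simp add: Box_def dwin_def)

lemma dwin_Seq: "dwin (Seq \<alpha> \<beta>) X = dwin \<alpha> (dwin \<beta> X)"
  by (simp add: dwin_def)

lemma dwin_Choice: "dwin (Choice \<alpha> \<beta>) X = dwin \<alpha> X \<inter> dwin \<beta> X"
  by (simp add: dwin_def)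

lemma dwin_DChoice: "dwin (DChoice \<alpha> \<beta>) X = dwin \<alpha> X \<union> dwin \<beta> X"
  by (simp add: dwin_def)

lemma dwin_mono: "X \<subseteq> Y \<Longrightarrow> dwin \<alpha> X \<subseteq> dwin \<alpha> Y"
  unfolding dwin_def by (metis Compl_subset_Compl_iff win_mono)

lemma win_proj_ang_subset: "win (proj_ang \<alpha> S) X \<subseteq> win (erase \<alpha>) X"
proof (induction \<alpha> arbitrary: S X)
  case (LSeq a \<gamma> \<delta>)
  have "win (proj_ang \<gamma> (S(End := S (N (lab \<delta>))))) (win (proj_ang \<delta> S) X)
      \<subseteq> win (erase \<gamma>) (win (proj_ang \<delta> S) X)"
    by (rule LSeq.IH(1))
  also have "\<dots> \<subseteq> win (erase \<gamma>) (win (erase \<delta>) X)"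
    by (rule win_mono) (rule LSeq.IH(2))
  finally show ?case by simp
qed (simp; (intro lfp_mono gfp_mono)?; blast)+

lemma win_erase_subset_proj_dem: "win (erase \<alpha>) X \<subseteq> win (proj_dem \<alpha> S) X"
proof (induction \<alpha> arbitrary: S X)
  case (LSeq a \<gamma> \<delta>)
  have "win (erase \<gamma>) (win (erase \<delta>) X) \<subseteq> win (erase \<gamma>) (win (proj_dem \<delta> S) X)"
    by (rule win_mono) (rule LSeq.IH(2))
  also have "\<dots> \<subseteq> win (proj_dem \<gamma> (S(End := S (N (lab \<delta>))))) (win (proj_dem \<delta> S) X)"
    by (rule LSeq.IH(1))
  finally show ?case by simp
qed (simp; (intro lfp_mono gfp_mono)?; blast)+

lemma win_DLoop_coinduct: "I \<subseteq> X \<inter> win \<alpha> I \<Longrightarrow> I \<subseteq> win (DLoop \<alpha>) X"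
  by (simp add: gfp_upperbound)

lemma dwin_Loop_induct:
  assumes "I \<subseteq> X \<inter> dwin \<alpha> I"
  shows "I \<subseteq> dwin (Loop \<alpha>) X"
proof -
  have "lfp (\<lambda>Z. - X \<union> win \<alpha> Z) \<subseteq> - I"
    using assms by (intro lfp_lowerbound) (auto simp: dwin_def)
  then show ?thesis
    by (auto simp: dwin_def)
qed

lemma dwin_proj_dem_subset: "dwin (proj_dem \<alpha> S) X \<subseteq> dwin (erase \<alpha>) X"
  unfolding dwin_def using win_erase_subset_proj_dem by blast

lemma lab_nodes: "lab \<alpha> \<in> nodes \<alpha>"
  by (cases \<alpha>) (auto simp: nodes_def)

lemma suffix_lab: "suffix (lab \<alpha>) \<alpha> = erase \<alpha>"
  by (cases \<alpha>) auto

lemma nodes_simps [simp]: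
  "nodes (LChoice a \<gamma> \<delta>) = insert a (nodes \<gamma> \<union> nodes \<delta>)"
  "nodes (LDChoice a \<gamma> \<delta>) = insert a (nodes \<gamma> \<union> nodes \<delta>)"
  "nodes (LSeq a \<gamma> \<delta>) = insert a (nodes \<gamma> \<union> nodes \<delta>)"
  "nodes (LLoop a \<gamma>) = insert a (nodes \<gamma>)"
  "nodes (LDLoop a \<gamma>) = insert a (nodes \<gamma>)"
  by (auto simp: nodes_def)

locale compositional_semantics =
  fixes sem :: "game \<Rightarrow> state set \<Rightarrow> state set"
  assumes sem_mono: "X \<subseteq> Y \<Longrightarrow> sem \<alpha> X \<subseteq> sem \<alpha> Y"
    and sem_Seq: "sem (Seq \<alpha> \<beta>) X = sem \<alpha> (sem \<beta> X)"
begin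

definition subvalue_map :: "smap \<Rightarrow> lgame \<Rightarrow> bool" where
  "subvalue_map S \<alpha> \<longleftrightarrow> (\<forall>b\<in>nodes \<alpha>. fsem (S (N b)) \<subseteq> sem (suffix b \<alpha>) (fsem (S End)))"

lemma subvalue_map_root:
  "subvalue_map S \<alpha> \<Longrightarrow> fsem (S (N (lab \<alpha>))) \<subseteq> sem (erase \<alpha>) (fsem (S End))"
  using lab_nodes by (fastforce simp: subvalue_map_def suffix_lab)

lemma subvalue_map_atomic:
  "nodes \<alpha> = {lab \<alpha>} \<Longrightarrow> fsem (S (N (lab \<alpha>))) \<subseteq> sem (erase \<alpha>) (fsem (S End)) \<Longrightarrow>
   subvalue_map S \<alpha>"
  by (simp add: subvalue_map_def suffix_lab)

lemma subvalue_map_Seq_suffix: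
  assumes "subvalue_map (S(End := Q)) \<gamma>" and "fsem Q \<subseteq> sem \<kappa> (fsem (S End))"
    and "c \<in> nodes \<gamma>"
  shows "fsem (S (N c)) \<subseteq> sem (Seq (suffix c \<gamma>) \<kappa>) (fsem (S End))"
proof -
  have "fsem (S (N c)) \<subseteq> sem (suffix c \<gamma>) (fsem Q)"
    using assms(1,3) by (simp add: subvalue_map_def)
  also have "\<dots> \<subseteq> sem (suffix c \<gamma>) (sem \<kappa> (fsem (S End)))"
    using assms(2) by (rule sem_mono)
  finally show ?thesis by (simp add: sem_Seq)
qed

lemma subvalue_map_LChoice:
  "fsem (S (N a)) \<subseteq> sem (erase (LChoice a \<gamma> \<delta>)) (fsem (S End)) \<Longrightarrow>
   subvalue_map S \<gamma> \<Longrightarrow> subvalue_map S \<delta> \<Longrightarrow> subvalue_map S (LChoice a \<gamma> \<delta>)"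
  by (auto simp: subvalue_map_def)

lemma subvalue_map_LDChoice:
  "fsem (S (N a)) \<subseteq> sem (erase (LDChoice a \<gamma> \<delta>)) (fsem (S End)) \<Longrightarrow>
   subvalue_map S \<gamma> \<Longrightarrow> subvalue_map S \<delta> \<Longrightarrow> subvalue_map S (LDChoice a \<gamma> \<delta>)"
  by (auto simp: subvalue_map_def)

lemma subvalue_map_LSeq:
  assumes root: "fsem (S (N a)) \<subseteq> fsem (S (N (lab \<gamma>)))"
    and \<gamma>: "subvalue_map (S(End := S (N (lab \<delta>)))) \<gamma>" and \<delta>: "subvalue_map S \<delta>"
  shows "subvalue_map S (LSeq a \<gamma> \<delta>)"
proof -
  have \<gamma>_then_\<delta>: "fsem (S (N c)) \<subseteq> sem (Seq (suffix c \<gamma>) (erase \<delta>)) (fsem (S End))"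
    if "c \<in> nodes \<gamma>" for c
    using \<gamma> subvalue_map_root[OF \<delta>] that by (rule subvalue_map_Seq_suffix)
  have "fsem (S (N a)) \<subseteq> sem (erase (LSeq a \<gamma> \<delta>)) (fsem (S End))"
    using root \<gamma>_then_\<delta>[OF lab_nodes] by (simp add: suffix_lab)
  with \<gamma>_then_\<delta> \<delta> show ?thesis
    by (auto simp: subvalue_map_def)
qed

lemma subvalue_map_LLoop:
  assumes root: "fsem (S (N a)) \<subseteq> sem (erase (LLoop a \<gamma>)) (fsem (S End))"
    and \<gamma>: "subvalue_map (S(End := S (N a))) \<gamma>"
  shows "subvalue_map S (LLoop a \<gamma>)"
  using root subvalue_map_Seq_suffix[OF \<gamma> root] by (auto simp: subvalue_map_def)

lemma subvalue_map_LDLoop: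
  assumes root: "fsem (S (N a)) \<subseteq> sem (erase (LDLoop a \<gamma>)) (fsem (S End))"
    and \<gamma>: "subvalue_map (S(End := S (N a))) \<gamma>"
  shows "subvalue_map S (LDLoop a \<gamma>)"
  using root subvalue_map_Seq_suffix[OF \<gamma> root] by (auto simp: subvalue_map_def)

end

interpretation angel: compositional_semantics win
  by unfold_locales (simp_all add: win_mono)

interpretation demon: compositional_semantics dwin
  by unfold_locales (fact dwin_mono, fact dwin_Seq)

lemma ind_ang_subvalue_map: "ind_ang S \<alpha> \<Longrightarrow> angel.subvalue_map S \<alpha>"
proof (induction \<alpha> arbitrary: S)
  case (LChoice a \<gamma> \<delta>)
  then have "angel.subvalue_map S \<gamma>" "angel.subvalue_map S \<delta>"
    by simp_all
  with LChoice.prems show ?case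
    by (intro angel.subvalue_map_LChoice)
      (auto simp: valid_Imp dest!: angel.subvalue_map_root)
next
  case (LDChoice a \<gamma> \<delta>)
  then have "angel.subvalue_map S \<gamma>" "angel.subvalue_map S \<delta>"
    by simp_all
  with LDChoice.prems show ?case
    by (intro angel.subvalue_map_LDChoice)
      (auto simp: valid_Imp dest!: angel.subvalue_map_root)
next
  case (LSeq a \<gamma> \<delta>)
  then show ?case
    by (intro angel.subvalue_map_LSeq) (auto simp: valid_Imp)
next
  case (LLoop a \<gamma>)
  have "fsem (S (N a)) \<subseteq> win (proj_ang (LLoop a \<gamma>) S) (fsem (S End))"
    using LLoop.prems by (simp add: valid_Imp)
  also have "\<dots> \<subseteq> win (erase (LLoop a \<gamma>)) (fsem (S End))"
    by (rule win_proj_ang_subset)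
  finally show ?case
    using LLoop by (intro angel.subvalue_map_LLoop) auto
next
  case (LDLoop a \<gamma>)
  have \<gamma>: "angel.subvalue_map (S(End := S (N a))) \<gamma>"
    using LDLoop by auto
  have "fsem (S (N a)) \<subseteq> fsem (S End) \<inter> win (erase \<gamma>) (fsem (S (N a)))"
    using LDLoop.prems angel.subvalue_map_root[OF \<gamma>] by (auto simp: valid_Imp)
  then have "fsem (S (N a)) \<subseteq> win (erase (LDLoop a \<gamma>)) (fsem (S End))"
    unfolding erase.simps by (rule win_DLoop_coinduct)
  then show ?case using \<gamma>
    by (rule angel.subvalue_map_LDLoop)
qed (rule angel.subvalue_map_atomic; simp add: nodes_def valid_Imp)+

lemma ind_dem_subvalue_map: "ind_dem S \<alpha> \<Longrightarrow> demon.subvalue_map S \<alpha>"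
proof (induction \<alpha> arbitrary: S)
  case (LChoice a \<gamma> \<delta>)
  then have "demon.subvalue_map S \<gamma>" "demon.subvalue_map S \<delta>"
    by simp_all
  with LChoice.prems show ?case
    by (intro demon.subvalue_map_LChoice)
      (auto simp: valid_Imp dwin_Choice dest!: demon.subvalue_map_root)
next
  case (LDChoice a \<gamma> \<delta>)
  then have "demon.subvalue_map S \<gamma>" "demon.subvalue_map S \<delta>"
    by simp_all
  with LDChoice.prems show ?case
    by (intro demon.subvalue_map_LDChoice)
      (auto simp: valid_Imp dwin_DChoice dest!: demon.subvalue_map_root)
next
  case (LSeq a \<gamma> \<delta>)
  then show ?case
    by (intro demon.subvalue_map_LSeq) (auto simp: valid_Imp)
next
  case (LLoop a \<gamma>)
  have \<gamma>: "demon.subvalue_map (S(End := S (N a))) \<gamma>"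
    using LLoop by auto
  have "fsem (S (N a)) \<subseteq> fsem (S End) \<inter> dwin (erase \<gamma>) (fsem (S (N a)))"
    using LLoop.prems demon.subvalue_map_root[OF \<gamma>] by (auto simp: valid_Imp)
  then have "fsem (S (N a)) \<subseteq> dwin (erase (LLoop a \<gamma>)) (fsem (S End))"
    unfolding erase.simps by (rule dwin_Loop_induct)
  then show ?case using \<gamma>
    by (rule demon.subvalue_map_LLoop)
next
  case (LDLoop a \<gamma>)
  have "fsem (S (N a)) \<subseteq> dwin (proj_dem (LDLoop a \<gamma>) S) (fsem (S End))"
    using LDLoop.prems by (simp add: valid_Imp fsem_Box)
  also have "\<dots> \<subseteq> dwin (erase (LDLoop a \<gamma>)) (fsem (S End))"
    by (rule dwin_proj_dem_subset)
  finally show ?case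
    using LDLoop by (intro demon.subvalue_map_LDLoop) auto
qed (rule demon.subvalue_map_atomic; simp add: nodes_def valid_Imp fsem_Box)+

theorem mainTheorem3:
  fixes \<alpha> :: lgame and S :: smap
  assumes "well_labelled \<alpha>"
  shows "(ind_ang S \<alpha> \<longrightarrow> ang_subvalue S \<alpha>) \<and> (ind_dem S \<alpha> \<longrightarrow> dem_subvalue S \<alpha>)"
proof -
  have "ang_subvalue S \<alpha> \<longleftrightarrow> angel.subvalue_map S \<alpha>"
    by (simp add: ang_subvalue_def angel.subvalue_map_def valid_Imp)
  moreover have "dem_subvalue S \<alpha> \<longleftrightarrow> demon.subvalue_map S \<alpha>"
    by (simp add: dem_subvalue_def demon.subvalue_map_def valid_Imp fsem_Box)
  ultimately show ?thesis
    using ind_ang_subvalue_map ind_dem_subvalue_map by blast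
qed

end
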